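(* Fix $\delta\in(0,1)$ and let $n_h\ge 32\,\frac{\log(4|\mathcal{X}|^2/\delta)}{(1-\gamma)^2}$. Let $\widehat P=\frac1{n_h}\sum_{i\in I_1}Z_i$ and $\widetilde P=\frac1{n_h}\sum_{i\in I_2}Z_i$ be hold-out estimates formed from two disjoint sets $I_1,I_2$ of $n_h$ i.i.d. generative transition samples each. Then for any (fixed) positive semidefinite $|\mathcal{X}|\times|\mathcal{X}|$ matrix $M$, with probability at least $1-\delta$, $$\|(I-\gamma\widehat P)^{-1}M(I-\gamma\widetilde P)^{-\top}\|_{\mathrm{diag}}\le 3\,\|(I-\gamma P)^{-1}M(I-\gamma P)^{-\top}\|_{\mathrm{diag}}.$$
   Context: Finite state space $\mathcal{X}$, discount $\gamma\in(0,1)$, row-stochastic transition matrix $P$ (row $x$ is $P(\cdot\mid x)$). A generative transition sample is a random $|\mathcal{X}|\times|\mathcal{X}|$ matrix $Z$ whose row $x$ equals $e_{x'}^\top$ with $x'\sim P(\cdot\mid x)$; samples are i.i.d. For a square matrix $A$, $\|A\|_{\mathrm{diag}}:=\max_i|A_{ii}|$. *)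

theory Defs
  imports "HOL-Analysis.Analysis" "HOL-Probability.Probability"
begin

definition row_stochastic :: "real^'x^'x \<Rightarrow> bool" where
  "row_stochastic P \<longleftrightarrow> (\<forall>x y. 0 \<le> P$x$y) \<and> (\<forall>x. (\<Sum>y\<in>UNIV. P$x$y) = 1)"

definition row_pmf :: "real^'x^'x \<Rightarrow> 'x \<Rightarrow> 'x pmf" where
  "row_pmf P x = embed_pmf (\<lambda>y. P$x$y)"

text \<open>One generative transition sample, encoded as the successor map (each row drawn independently).\<close>
definition sample_pmf :: "real^'x^'x \<Rightarrow> ('x::finite \<Rightarrow> 'x) pmf" where
  "sample_pmf P = Pi_pmf UNIV undefined (\<lambda>x. row_pmf P x)"

definition Zmat :: "('x::finite \<Rightarrow> 'x) \<Rightarrow> real^'x^'x" where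
  "Zmat f = (\<chi> x y. if f x = y then 1 else 0)"

definition samples_pmf :: "real^'x^'x \<Rightarrow> nat \<Rightarrow> (nat \<Rightarrow> ('x::finite \<Rightarrow> 'x)) pmf" where
  "samples_pmf P n = Pi_pmf {..<n} undefined (\<lambda>_. sample_pmf P)"

definition empirical :: "nat \<Rightarrow> (nat \<Rightarrow> ('x::finite \<Rightarrow> 'x)) \<Rightarrow> real^'x^'x" where
  "empirical n \<omega> = (1 / real n) *\<^sub>R (\<Sum>i<n. Zmat (\<omega> i))"

definition diag_norm :: "real^'x^'x \<Rightarrow> real" where
  "diag_norm A = Max (range (\<lambda>i::'x::finite. \<bar>A$i$i\<bar>))"

definition psd :: "real^'x^'x \<Rightarrow> bool" where
  "psd M \<longleftrightarrow> transpose M = M \<and> (\<forall>v. 0 \<le> v \<bullet> (M *v v))"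

end

theory Submission
  imports Defs
begin

text \<open>
  Let R = (I - \<gamma> P)^-1, let R' = (I - \<gamma> P')^-1 for an empirical estimate P', and let
  \<sigma> = \<parallel>R M R^T\<parallel>_diag. A diagonal entry of A M B^T is the
  M-inner product of row i of A with row i of B, so by Cauchy-Schwarz for the seminorm
  |u|_M = sqrt (u^T M u) it suffices that every row of each empirical resolvent has seminorm at
  most 1.7 sqrt \<sigma>; the rows of R itself have seminorm at most sqrt \<sigma>. The resolvent identity
  R' = R + \<gamma> R' (P' - P) R, with R' entrywise nonnegative and of row sums 1/(1 - \<gamma>), reduces this
  to bounding every row of (P' - P) R by 0.7 (1 - \<gamma>) sqrt \<sigma>. Row j of (P' - P) R is an average
  of n_h i.i.d. centred vectors of seminorm at most 2 sqrt \<sigma>: a second-moment computation bounds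
  the mean of its seminorm and McDiarmid's inequality its upward deviations. A union bound over
  the rows and over the two independent hold-out estimates finishes the proof.
\<close>

section \<open>Concentration for i.i.d. samples with finite support\<close>

lemma expectation_pair_pmf_finite:
  fixes f :: "'a \<times> 'b \<Rightarrow> real"
  assumes "finite (set_pmf A)" "finite (set_pmf B)"
  shows "measure_pmf.expectation (pair_pmf A B) f =
         measure_pmf.expectation A (\<lambda>a. measure_pmf.expectation B (\<lambda>b. f (a, b)))"
proof -
  have "measure_pmf.expectation (pair_pmf A B) f =
        (\<Sum>x\<in>set_pmf A \<times> set_pmf B. f x * pmf (pair_pmf A B) x)"
    using assms by (intro integral_measure_pmf_real) auto
  also have "\<dots> = (\<Sum>a\<in>set_pmf A. (\<Sum>b\<in>set_pmf B. f (a, b) * pmf B b) * pmf A a)"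
    by (simp add: sum.cartesian_product' pmf_pair sum_distrib_left sum_distrib_right mult_ac)
  also have "\<dots> = measure_pmf.expectation A (\<lambda>a. measure_pmf.expectation B (\<lambda>b. f (a, b)))"
    using assms by (simp add: integral_measure_pmf_real[where A = "set_pmf A"]
                              integral_measure_pmf_real[where A = "set_pmf B"])
  finally show ?thesis .
qed

lemma finite_set_Pi_pmf:
  assumes "finite I" "\<And>i. i \<in> I \<Longrightarrow> finite (set_pmf (p i))"
  shows "finite (set_pmf (Pi_pmf I d p))"
  using assms by (simp add: set_Pi_pmf finite_PiE_dflt)

lemma expectation_Pi_pmf_lessThan_Suc:
  fixes f :: "(nat \<Rightarrow> 'a) \<Rightarrow> real"
  assumes fin: "finite (set_pmf D)"
  shows "measure_pmf.expectation (Pi_pmf {..<Suc n} d (\<lambda>_. D)) f =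
         measure_pmf.expectation (Pi_pmf {..<n} d (\<lambda>_. D))
           (\<lambda>w. measure_pmf.expectation D (\<lambda>y. f (w(n := y))))"
proof -
  let ?Q = "Pi_pmf {..<n} d (\<lambda>_. D)"
  have "Pi_pmf {..<Suc n} d (\<lambda>_. D) = map_pmf (\<lambda>(y, w). w(n := y)) (pair_pmf D ?Q)"
    unfolding lessThan_Suc by (subst Pi_pmf_insert) auto
  also have "\<dots> = map_pmf (\<lambda>(w, y). w(n := y)) (pair_pmf ?Q D)"
    by (subst pair_commute_pmf) (simp add: map_pmf_comp split_beta')
  finally show ?thesis
    using fin by (simp add: expectation_pair_pmf_finite finite_set_Pi_pmf)
qed

lemma Hoeffdings_lemma_pmf:
  fixes h :: "'a \<Rightarrow> real"
  assumes fin: "finite (set_pmf D)" and l: "l > 0"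
    and osc: "\<And>x y. x \<in> set_pmf D \<Longrightarrow> y \<in> set_pmf D \<Longrightarrow> \<bar>h x - h y\<bar> \<le> c"
  shows "measure_pmf.expectation D (\<lambda>x. exp (l * (h x - measure_pmf.expectation D h)))
           \<le> exp (l\<^sup>2 * c\<^sup>2 / 8)"
proof -
  define a where "a = Min (h ` set_pmf D)"
  have "a \<in> h ` set_pmf D"
    unfolding a_def using fin set_pmf_not_empty by (intro Min_in) auto
  then obtain y where y: "y \<in> set_pmf D" "a = h y" by auto
  have range: "h x \<in> {a..a + c}" if "x \<in> set_pmf D" for x
    using osc[OF that y(1)] Min_le[of "h ` set_pmf D" "h x"] fin that
    unfolding y(2)[symmetric] a_def by auto
  interpret interval_bounded_random_variable "measure_pmf D" h a "a + c"
  proof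
    show "AE x in measure_pmf D. h x \<in> {a..a + c}" by (intro AE_pmfI range)
  qed simp
  have "ennreal (measure_pmf.expectation D (\<lambda>x. exp (l * (h x - measure_pmf.expectation D h))))
      = (\<integral>\<^sup>+x. exp (l * (h x - measure_pmf.expectation D h)) \<partial>D)"
    by (intro nn_integral_eq_integral[symmetric] integrable_measure_pmf_finite fin) auto
  also have "\<dots> \<le> ennreal (exp (l\<^sup>2 * c\<^sup>2 / 8))"
    using Hoeffdings_lemma_nn_integral[OF l] by simp
  finally show ?thesis by (simp add: ennreal_le_iff)
qed

lemma expectation_update_bounded_differences:
  fixes f :: "(nat \<Rightarrow> 'a) \<Rightarrow> real"
  assumes fin: "finite (set_pmf D)" and i: "i \<noteq> n"
    and bd: "\<And>w x y. x \<in> set_pmf D \<Longrightarrow> y \<in> set_pmf D \<Longrightarrow> \<bar>f (w(i := x)) - f (w(i := y))\<bar> \<le> c"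
    and x: "x \<in> set_pmf D" and y: "y \<in> set_pmf D"
  shows "\<bar>measure_pmf.expectation D (\<lambda>z. f (w(i := x, n := z)))
          - measure_pmf.expectation D (\<lambda>z. f (w(i := y, n := z)))\<bar> \<le> c"
proof -
  have "measure_pmf.expectation D (\<lambda>z. f (w(i := x, n := z)))
          - measure_pmf.expectation D (\<lambda>z. f (w(i := y, n := z)))
      = measure_pmf.expectation D (\<lambda>z. f ((w(n := z))(i := x)) - f ((w(n := z))(i := y)))"
    using i by (simp add: fun_upd_twist integrable_measure_pmf_finite[OF fin])
  also have "\<bar>\<dots>\<bar> \<le> measure_pmf.expectation D (\<lambda>z. \<bar>f ((w(n := z))(i := x)) - f ((w(n := z))(i := y))\<bar>)"
    by (rule integral_abs_bound)
  also have "\<dots> \<le> c"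
    using bd[OF x y] by (intro measure_pmf.integral_le_const integrable_measure_pmf_finite fin) auto
  finally show ?thesis .
qed

lemma McDiarmid_mgf_Pi_pmf:
  fixes f :: "(nat \<Rightarrow> 'a) \<Rightarrow> real"
  assumes fin: "finite (set_pmf D)" and l: "l > 0"
    and bd: "\<And>w i x y. i < n \<Longrightarrow> x \<in> set_pmf D \<Longrightarrow> y \<in> set_pmf D \<Longrightarrow>
               \<bar>f (w(i := x)) - f (w(i := y))\<bar> \<le> c"
  shows "measure_pmf.expectation (Pi_pmf {..<n} d (\<lambda>_. D))
           (\<lambda>w. exp (l * (f w - measure_pmf.expectation (Pi_pmf {..<n} d (\<lambda>_. D)) f)))
         \<le> exp (l\<^sup>2 * real n * c\<^sup>2 / 8)"
  using bd
proof (induction n arbitrary: f)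
  case 0
  then show ?case by simp
next
  case (Suc n)
  let ?Q = "Pi_pmf {..<n} d (\<lambda>_. D)" and ?S = "Pi_pmf {..<Suc n} d (\<lambda>_. D)"
  have finQ: "finite (set_pmf ?Q)" by (intro finite_set_Pi_pmf fin) auto
  define g where "g w = measure_pmf.expectation D (\<lambda>y. f (w(n := y)))" for w
  let ?Eg = "measure_pmf.expectation ?Q g"
  have IH: "measure_pmf.expectation ?Q (\<lambda>w. exp (l * (g w - ?Eg))) \<le> exp (l\<^sup>2 * real n * c\<^sup>2 / 8)"
    unfolding g_def
    by (intro Suc.IH expectation_update_bounded_differences[OF fin] Suc.prems) auto
  have Ef: "measure_pmf.expectation ?S f = ?Eg"
    unfolding g_def by (rule expectation_Pi_pmf_lessThan_Suc[OF fin])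
  have Hoeffding: "measure_pmf.expectation D (\<lambda>y. exp (l * (f (w(n := y)) - g w))) \<le> exp (l\<^sup>2 * c\<^sup>2 / 8)"
    for w
    unfolding g_def by (intro Hoeffdings_lemma_pmf[OF fin l] Suc.prems) auto
  have split: "exp (l * (f (w(n := y)) - ?Eg)) = exp (l * (g w - ?Eg)) * exp (l * (f (w(n := y)) - g w))"
    for w y by (simp add: algebra_simps flip: exp_add)
  have "measure_pmf.expectation ?S (\<lambda>w. exp (l * (f w - measure_pmf.expectation ?S f)))
      = measure_pmf.expectation ?Q (\<lambda>w. measure_pmf.expectation D (\<lambda>y. exp (l * (f (w(n := y)) - ?Eg))))"
    unfolding Ef by (rule expectation_Pi_pmf_lessThan_Suc[OF fin])
  also have "\<dots> = measure_pmf.expectation ?Q (\<lambda>w. exp (l * (g w - ?Eg)) *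
          measure_pmf.expectation D (\<lambda>y. exp (l * (f (w(n := y)) - g w))))"
    by (simp only: split integral_mult_right_zero)
  also have "\<dots> \<le> measure_pmf.expectation ?Q (\<lambda>w. exp (l * (g w - ?Eg)) * exp (l\<^sup>2 * c\<^sup>2 / 8))"
    by (intro integral_mono integrable_measure_pmf_finite finQ mult_left_mono Hoeffding) auto
  also have "\<dots> \<le> exp (l\<^sup>2 * real n * c\<^sup>2 / 8) * exp (l\<^sup>2 * c\<^sup>2 / 8)"
    using IH by simp
  also have "\<dots> = exp (l\<^sup>2 * real (Suc n) * c\<^sup>2 / 8)"
    by (simp add: distrib_left distrib_right add_divide_distrib flip: exp_add)
  finally show ?case .
qed

lemma McDiarmid_inequality_Pi_pmf:
  fixes f :: "(nat \<Rightarrow> 'a) \<Rightarrow> real"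
  assumes fin: "finite (set_pmf D)" and t: "t > 0" and c: "c > 0" and n: "n > 0"
    and bd: "\<And>w i x y. i < n \<Longrightarrow> x \<in> set_pmf D \<Longrightarrow> y \<in> set_pmf D \<Longrightarrow>
               \<bar>f (w(i := x)) - f (w(i := y))\<bar> \<le> c"
  shows "measure_pmf.prob (Pi_pmf {..<n} d (\<lambda>_. D))
           {w. f w - measure_pmf.expectation (Pi_pmf {..<n} d (\<lambda>_. D)) f \<ge> t}
         \<le> exp (- 2 * t\<^sup>2 / (real n * c\<^sup>2))"
proof -
  let ?Q = "Pi_pmf {..<n} d (\<lambda>_. D)"
  let ?E = "measure_pmf.expectation ?Q f"
  define l where "l = 4 * t / (real n * c\<^sup>2)"
  have l: "l > 0" unfolding l_def using t c n by auto
  have finQ: "finite (set_pmf ?Q)" by (intro finite_set_Pi_pmf fin) auto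
  have Markov: "indicator {w. f w - ?E \<ge> t} w \<le> exp (l * (f w - ?E)) / exp (l * t)" for w
    using l by (auto simp: indicator_def)
  have "measure_pmf.prob ?Q {w. f w - ?E \<ge> t} = measure_pmf.expectation ?Q (indicator {w. f w - ?E \<ge> t})"
    by simp
  also have "\<dots> \<le> measure_pmf.expectation ?Q (\<lambda>w. exp (l * (f w - ?E)) / exp (l * t))"
    by (intro integral_mono integrable_measure_pmf_finite finQ Markov)
  also have "\<dots> = measure_pmf.expectation ?Q (\<lambda>w. exp (l * (f w - ?E))) / exp (l * t)"
    by simp
  also have "\<dots> \<le> exp (l\<^sup>2 * real n * c\<^sup>2 / 8) / exp (l * t)"
    by (intro divide_right_mono McDiarmid_mgf_Pi_pmf[OF fin l] bd) auto
  also have "\<dots> = exp (- 2 * t\<^sup>2 / (real n * c\<^sup>2))"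
    using c n by (simp add: l_def field_simps power2_eq_square flip: exp_diff)
  finally show ?thesis .
qed

lemma expectation_le_sqrt_second_moment:
  fixes f :: "'a \<Rightarrow> real"
  assumes "finite (set_pmf D)"
  shows "measure_pmf.expectation D f \<le> sqrt (measure_pmf.expectation D (\<lambda>x. (f x)\<^sup>2))"
proof -
  have "0 \<le> measure_pmf.expectation D (\<lambda>x. (f x - measure_pmf.expectation D f)\<^sup>2)"
    by simp
  also have "\<dots> = measure_pmf.expectation D (\<lambda>x. (f x)\<^sup>2) - (measure_pmf.expectation D f)\<^sup>2"
    by (intro measure_pmf.variance_eq integrable_measure_pmf_finite assms)
  finally show ?thesis
    using real_sqrt_le_mono[of "(measure_pmf.expectation D f)\<^sup>2"] by fastforce
qed

section \<open>Resolvents of row-stochastic matrices\<close>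

lemma matrix_inv_inverse:
  assumes "invertible A"
  shows "A ** matrix_inv A = mat 1" "matrix_inv A ** A = mat 1"
  using someI_ex[OF assms[unfolded invertible_def]] by (simp_all add: matrix_inv_def)

lemma row_matrix_mult: "(A ** B) $ i = (\<Sum>j\<in>UNIV. A $ i $ j *\<^sub>R B $ j)"
  by (simp add: vec_eq_iff matrix_matrix_mult_def sum_component)

lemma matrix_diff_ldistrib: "A ** (B - C) = A ** B - A ** (C :: 'a::ring_1^'n^'m)"
  by (simp add: vec_eq_iff matrix_matrix_mult_def sum_subtractf right_diff_distrib)

lemma matrix_diff_rdistrib: "(A - B) ** C = A ** C - B ** (C :: 'a::ring_1^'n^'m)"
  by (simp add: vec_eq_iff matrix_matrix_mult_def sum_subtractf left_diff_distrib)

lemma row_stochastic_mult_le: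
  assumes "row_stochastic Q" "\<And>j. x $ j \<le> m"
  shows "(Q *v x) $ i \<le> m"
proof -
  have "(Q *v x) $ i = (\<Sum>j\<in>UNIV. Q $ i $ j * x $ j)"
    by (simp add: matrix_vector_mult_def)
  also have "\<dots> \<le> (\<Sum>j\<in>UNIV. Q $ i $ j * m)"
    using assms unfolding row_stochastic_def by (intro sum_mono mult_left_mono) auto
  also have "\<dots> = m"
    using assms by (simp add: row_stochastic_def flip: sum_distrib_right)
  finally show ?thesis .
qed

lemma row_stochastic_mult_ge:
  assumes "row_stochastic Q" "\<And>j. m \<le> x $ j"
  shows "m \<le> (Q *v x) $ i"
  using row_stochastic_mult_le[OF assms(1), of "- x" "- m"] assms(2)
  by (simp add: matrix_vector_mult_def sum_negf)

lemma discounted_mult: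
  fixes Q :: "real^'n::finite^'n"
  shows "(mat 1 - g *\<^sub>R Q) *v v = v - g *\<^sub>R (Q *v v)"
  by (simp add: matrix_vector_mult_diff_rdistrib scaleR_matrix_vector_assoc)

definition resolvent :: "real \<Rightarrow> real^'n::finite^'n \<Rightarrow> real^'n^'n" where
  "resolvent g Q = matrix_inv (mat 1 - g *\<^sub>R Q)"

context
  fixes Q :: "real^'n::finite^'n" and g :: real
  assumes Q: "row_stochastic Q" and g: "0 \<le> g" "g < 1"
begin

text \<open>Minimum principle: at a minimal coordinate of v the equation v = e + g Q v gives
  (1 - g) min v \<ge> e \<ge> 0, since Q averages.\<close>
lemma discounted_preimage_nonneg:
  assumes eq: "(mat 1 - g *\<^sub>R Q) *v v = e" and e: "\<And>k. 0 \<le> e $ k"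
  shows "0 \<le> v $ i"
proof -
  define m where "m = Min (range (\<lambda>j. v $ j))"
  have m_le: "m \<le> v $ j" for j unfolding m_def by simp
  have "m \<in> range (\<lambda>j. v $ j)" unfolding m_def by (intro Min_in) auto
  then obtain i0 where i0: "v $ i0 = m" by auto
  have "v $ i0 = e $ i0 + g * (Q *v v) $ i0"
    using arg_cong[OF eq, of "\<lambda>u. u $ i0"] by (simp add: discounted_mult)
  moreover have "g * m \<le> g * (Q *v v) $ i0"
    using g by (intro mult_left_mono row_stochastic_mult_ge[OF Q] m_le) auto
  ultimately have "(1 - g) * m \<ge> 0" using e[of i0] i0 by (simp add: algebra_simps)
  with g have "m \<ge> 0" by (simp add: zero_le_mult_iff)
  then show ?thesis using m_le[of i] by linarith
qed

lemma invertible_discounted: "invertible (mat 1 - g *\<^sub>R Q)"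
  unfolding invertible_left_inverse matrix_left_invertible_ker
proof (intro allI impI)
  fix x assume x: "(mat 1 - g *\<^sub>R Q) *v x = 0"
  then have "(mat 1 - g *\<^sub>R Q) *v (- x) = 0"
    by (simp add: linear_neg[OF matrix_vector_mul_linear])
  have "0 \<le> x $ i" for i using x by (rule discounted_preimage_nonneg) simp
  moreover have "0 \<le> (- x) $ i" for i
    using \<open>(mat 1 - g *\<^sub>R Q) *v (- x) = 0\<close> by (rule discounted_preimage_nonneg) simp
  ultimately show "x = 0" by (simp add: vec_eq_iff order_antisym)
qed

lemma resolvent_inverse:
  "(mat 1 - g *\<^sub>R Q) ** resolvent g Q = mat 1" "resolvent g Q ** (mat 1 - g *\<^sub>R Q) = mat 1"
  unfolding resolvent_def using matrix_inv_inverse[OF invertible_discounted] by simp_all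

lemma resolvent_nonneg: "0 \<le> resolvent g Q $ i $ j"
proof -
  let ?e = "\<chi> k. if k = j then 1 else (0::real)"
  have "(mat 1 - g *\<^sub>R Q) *v (resolvent g Q *v ?e) = ?e"
    by (simp add: matrix_vector_mul_assoc resolvent_inverse)
  then have "0 \<le> (resolvent g Q *v ?e) $ i"
    by (rule discounted_preimage_nonneg) simp
  then show ?thesis
    by (simp add: matrix_vector_mult_def if_distrib cong: if_cong)
qed

lemma resolvent_row_sum: "(\<Sum>j\<in>UNIV. resolvent g Q $ i $ j) = 1 / (1 - g)"
proof -
  let ?one = "(\<chi> k. 1) :: real^'n"
  have "Q *v ?one = ?one"
    using Q by (simp add: vec_eq_iff matrix_vector_mult_def row_stochastic_def)
  then have "(mat 1 - g *\<^sub>R Q) *v ?one = (1 - g) *\<^sub>R ?one"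
    by (simp add: discounted_mult scaleR_diff_left)
  then have "resolvent g Q *v ((1 - g) *\<^sub>R ?one) = ?one"
    by (metis matrix_vector_mul_assoc matrix_vector_mul_lid resolvent_inverse(2))
  then have "(1 - g) * (\<Sum>j\<in>UNIV. resolvent g Q $ i $ j) = 1"
    by (simp add: vec_eq_iff matrix_vector_mult_def sum_distrib_left mult.commute)
  with g show ?thesis by (simp add: field_simps)
qed

end

lemma resolvent_perturbation:
  assumes "row_stochastic P" "row_stochastic Q" "0 \<le> g" "g < 1"
  shows "resolvent g Q = resolvent g P + g *\<^sub>R (resolvent g Q ** (Q - P) ** resolvent g P)"
proof -
  let ?RQ = "resolvent g Q" and ?RP = "resolvent g P"
  have "?RQ - ?RP = ?RQ ** (mat 1 - g *\<^sub>R P) ** ?RP - ?RQ ** (mat 1 - g *\<^sub>R Q) ** ?RP"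
    using assms by (simp add: resolvent_inverse flip: matrix_mul_assoc)
  also have "\<dots> = ?RQ ** ((mat 1 - g *\<^sub>R P) - (mat 1 - g *\<^sub>R Q)) ** ?RP"
    by (simp only: matrix_diff_ldistrib matrix_diff_rdistrib)
  also have "(mat 1 - g *\<^sub>R P) - (mat 1 - g *\<^sub>R Q) = g *\<^sub>R (Q - P)"
    by (simp add: algebra_simps)
  also have "?RQ ** (g *\<^sub>R (Q - P)) ** ?RP = g *\<^sub>R (?RQ ** (Q - P) ** ?RP)"
    by (simp add: matrix_scalar_ac scalar_matrix_assoc)
  finally show ?thesis by (simp add: algebra_simps)
qed

section \<open>Empirical transition matrices\<close>

lemma empirical_entry:
  "empirical n w $ x $ y = (1 / real n) * (\<Sum>t<n. if w t x = y then 1 else 0)"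
  by (simp add: empirical_def Zmat_def sum_component)

lemma row_stochastic_empirical:
  assumes "n > 0"
  shows "row_stochastic (empirical n w)"
proof -
  have "(\<Sum>y\<in>UNIV. \<Sum>t<n. (if w t x = y then 1 else 0 :: real)) = real n" for x
    by (subst sum.swap) simp
  with assms have "(\<Sum>y\<in>UNIV. empirical n w $ x $ y) = 1" for x
    by (simp add: empirical_entry flip: sum_divide_distrib)
  moreover have "0 \<le> empirical n w $ x $ y" for x y
    by (simp add: empirical_entry sum_nonneg)
  ultimately show ?thesis unfolding row_stochastic_def by blast
qed

lemma row_empirical_mult:
  "(empirical n w ** R) $ j = (1 / real n) *\<^sub>R (\<Sum>t<n. R $ (w t j))"
proof -
  have "(empirical n w ** R) $ j
      = (\<Sum>k\<in>UNIV. (1 / real n) *\<^sub>R (\<Sum>t<n. (if w t j = k then 1 else 0 :: real) *\<^sub>R R $ k))"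
    unfolding row_matrix_mult
    by (intro sum.cong refl) (simp add: empirical_entry flip: scaleR_sum_left)
  also have "\<dots> = (1 / real n) *\<^sub>R (\<Sum>t<n. \<Sum>k\<in>UNIV. (if w t j = k then 1 else 0 :: real) *\<^sub>R R $ k)"
    by (simp only: sum.swap[of _ UNIV] flip: scaleR_sum_right)
  also have "\<dots> = (1 / real n) *\<^sub>R (\<Sum>t<n. R $ (w t j))"
    by (simp add: if_distrib[of "\<lambda>c. c *\<^sub>R _"] sum.delta cong: if_cong)
  finally show ?thesis .
qed

lemma pmf_row_pmf:
  assumes "row_stochastic P"
  shows "pmf (row_pmf P j) k = P $ j $ k"
proof -
  have "(\<integral>\<^sup>+y. ennreal (P $ j $ y) \<partial>count_space UNIV) = ennreal (\<Sum>y\<in>UNIV. P $ j $ y)"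
    using assms by (simp add: nn_integral_count_space_finite row_stochastic_def)
  with assms show ?thesis
    unfolding row_pmf_def row_stochastic_def by (subst pmf_embed_pmf) auto
qed

lemma expectation_sample_row:
  assumes "row_stochastic P"
  shows "measure_pmf.expectation (sample_pmf P) (\<lambda>s. R $ (s j) $ l) = (P ** R) $ j $ l"
proof -
  have row: "map_pmf (\<lambda>s. s j) (sample_pmf P) = row_pmf P j"
    unfolding sample_pmf_def by (subst Pi_pmf_component) auto
  have "measure_pmf.expectation (sample_pmf P) (\<lambda>s. R $ (s j) $ l)
      = measure_pmf.expectation (map_pmf (\<lambda>s. s j) (sample_pmf P)) (\<lambda>k. R $ k $ l)"
    by simp
  also have "\<dots> = measure_pmf.expectation (row_pmf P j) (\<lambda>k. R $ k $ l)"
    by (simp only: row)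
  also have "\<dots> = (\<Sum>k\<in>UNIV. R $ k $ l * pmf (row_pmf P j) k)"
    by (rule integral_measure_pmf_real) auto
  finally show ?thesis
    using assms by (simp add: pmf_row_pmf matrix_matrix_mult_def mult_ac)
qed

lemma prob_pair_pmf_Times_ge:
  assumes "measure_pmf.prob p (- A) \<le> a" "measure_pmf.prob q (- B) \<le> b"
  shows "measure_pmf.prob (pair_pmf p q) (A \<times> B) \<ge> 1 - a - b"
proof -
  let ?pq = "pair_pmf p q"
  have "measure_pmf.prob ?pq (- (A \<times> B)) \<le> measure_pmf.prob ?pq (fst -` (- A) \<union> snd -` (- B))"
    by (intro measure_pmf.finite_measure_mono) auto
  also have "\<dots> \<le> measure_pmf.prob ?pq (fst -` (- A)) + measure_pmf.prob ?pq (snd -` (- B))"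
    by (rule measure_Un_le) simp_all
  also have "\<dots> = measure_pmf.prob p (- A) + measure_pmf.prob q (- B)"
    by (simp add: map_fst_pair_pmf map_snd_pair_pmf flip: measure_map_pmf)
  finally show ?thesis
    using assms measure_pmf.prob_compl[of "A \<times> B" ?pq] by (simp add: Compl_eq_Diff_UNIV)
qed

lemma tail_exponent_ge:
  fixes s L :: real
  assumes L: "L \<ge> 1" and s: "s \<ge> 0" "32 * L \<le> s\<^sup>2"
  shows "7/10 * s - 2 > 0" "L \<le> (7/10 * s - 2)\<^sup>2 / 2"
proof -
  have "s \<ge> 5"
  proof (rule ccontr)
    assume "\<not> s \<ge> 5"
    then have "s\<^sup>2 < 5\<^sup>2" using s by (intro power_strict_mono) auto
    with L s show False by simp
  qed
  then show "7/10 * s - 2 > 0" by simp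
  have "(7/10 * s - 2)\<^sup>2 - s\<^sup>2 / 16 = 2/5 * ((s - 5) * (s - 2)) + 11/400 * s\<^sup>2"
    by (simp add: power2_eq_square algebra_simps)
  moreover have "0 \<le> (s - 5) * (s - 2)" using \<open>s \<ge> 5\<close> by simp
  ultimately have "s\<^sup>2 / 16 \<le> (7/10 * s - 2)\<^sup>2" using zero_le_power2[of s] by linarith
  with s show "L \<le> (7/10 * s - 2)\<^sup>2 / 2" by linarith
qed

lemma sample_size_consequences:
  fixes N \<delta> \<gamma> :: real and n :: nat
  defines "L \<equiv> ln (4 * N\<^sup>2 / \<delta>)"
  assumes N: "N \<ge> 1" and \<delta>: "0 < \<delta>" "\<delta> < 1" and \<gamma>: "\<gamma> < 1"
    and n: "real n \<ge> 32 * L / (1 - \<gamma>)\<^sup>2"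
  shows "L \<ge> 1" "32 * L \<le> (1 - \<gamma>)\<^sup>2 * real n" "n > 0" "N * exp (- L) \<le> \<delta> / 4"
proof -
  have pos: "0 < 4 * N\<^sup>2 / \<delta>" using N \<delta> by simp
  have "exp 1 \<le> (3::real)" by (rule exp_le)
  also have "\<dots> \<le> 4 * N\<^sup>2 / \<delta>"
  proof -
    have "3 * \<delta> \<le> 4 * N\<^sup>2" using one_le_power[OF N, of 2] \<delta> by linarith
    with \<delta> show ?thesis by (simp add: le_divide_eq)
  qed
  finally show L1: "L \<ge> 1" unfolding L_def using pos by (subst ln_ge_iff) auto
  show nL: "32 * L \<le> (1 - \<gamma>)\<^sup>2 * real n"
    using n \<gamma> by (simp add: divide_le_eq mult.commute)
  then show "n > 0" using L1 \<gamma> by (auto intro: ccontr)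
  have "N * exp (- L) = \<delta> / (4 * N)"
    unfolding L_def using pos N by (simp add: exp_minus exp_ln power2_eq_square field_simps)
  also have "\<dots> \<le> \<delta> / 4" using N \<delta> by (intro divide_left_mono) auto
  finally show "N * exp (- L) \<le> \<delta> / 4" .
qed

section \<open>The seminorm of a positive semidefinite matrix\<close>

lemma abs_diag_le_diag_norm: "\<bar>A $ i $ i\<bar> \<le> diag_norm A"
  unfolding diag_norm_def by (intro Max_ge) auto

lemma diag_norm_leI:
  assumes "\<And>i. \<bar>A $ i $ i\<bar> \<le> c"
  shows "diag_norm A \<le> c"
  unfolding diag_norm_def using assms by (subst Max_le_iff) auto

definition matrix_form :: "real^'n::finite^'n \<Rightarrow> real^'n \<Rightarrow> real^'n \<Rightarrow> real" where
  "matrix_form M u v = u \<bullet> (M *v v)"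

lemma bilinear_matrix_form: "bilinear (matrix_form M)"
  unfolding bilinear_def matrix_form_def
  by (auto simp: linear_iff inner_add_left inner_add_right matrix_vector_right_distrib
                 matrix_vector_mult_scaleR)

lemma matrix_form_expand: "matrix_form M u v = (\<Sum>k\<in>UNIV. \<Sum>l\<in>UNIV. u$k * M$k$l * v$l)"
  by (simp add: matrix_form_def inner_vec_def matrix_vector_mult_def sum_distrib_left mult.assoc)

lemma expectation_matrix_form_right:
  fixes Y :: "'a \<Rightarrow> real^'n::finite"
  assumes "finite (set_pmf D)"
  shows "measure_pmf.expectation D (\<lambda>s. matrix_form M v (Y s))
       = matrix_form M v (\<chi> l. measure_pmf.expectation D (\<lambda>s. Y s $ l))"
  unfolding matrix_form_expand
  by (simp add: Bochner_Integration.integral_sum integrable_measure_pmf_finite[OF assms])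

lemma diag_matrix_form: "(A ** M ** transpose B) $ i $ i = matrix_form M (A $ i) (B $ i)"
proof -
  have "(A ** M ** transpose B) $ i $ i = (\<Sum>l\<in>UNIV. \<Sum>k\<in>UNIV. A$i$k * M$k$l * B$i$l)"
    by (simp add: matrix_matrix_mult_def transpose_def sum_distrib_right)
  also have "\<dots> = (\<Sum>k\<in>UNIV. \<Sum>l\<in>UNIV. A$i$k * M$k$l * B$i$l)"
    by (rule sum.swap)
  finally show ?thesis
    by (simp add: matrix_form_expand)
qed

locale psd_matrix =
  fixes M :: "real^'n::finite^'n"
  assumes psd: "psd M"
begin

lemma matrix_form_nonneg: "0 \<le> matrix_form M u u"
  using psd by (simp add: psd_def matrix_form_def)

lemma matrix_form_commute: "matrix_form M u v = matrix_form M v u"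
  using psd unfolding psd_def matrix_form_def
  by (metis dot_lmul_matrix inner_commute transpose_matrix_vector)

lemma matrix_form_Cauchy_Schwarz: "(matrix_form M u v)\<^sup>2 \<le> matrix_form M u u * matrix_form M v v"
proof -
  define a b c where "a = matrix_form M u u" and "b = matrix_form M u v" and "c = matrix_form M v v"
  have quadratic: "0 \<le> a - 2 * t * b + t\<^sup>2 * c" for t
    using matrix_form_nonneg[of "u - t *\<^sub>R v"] bilinear_matrix_form[of M]
    by (simp add: a_def b_def c_def bilinear_lsub bilinear_rsub bilinear_lmul bilinear_rmul
                  matrix_form_commute[of v u] power2_eq_square algebra_simps)
  have "c \<ge> 0" unfolding c_def by (rule matrix_form_nonneg)
  show ?thesis
  proof (cases "c = 0")
    case True
    have "b = 0"
    proof (rule ccontr)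
      assume "b \<noteq> 0"
      then have "a - 2 * ((a + 1) / (2 * b)) * b = -1" by (simp add: field_simps)
      with quadratic[of "(a + 1) / (2 * b)"] True show False by simp
    qed
    with True show ?thesis by (simp add: b_def c_def)
  next
    case False
    with \<open>c \<ge> 0\<close> have "c > 0" by simp
    have "0 \<le> a - 2 * (b / c) * b + (b / c)\<^sup>2 * c" by (rule quadratic)
    also have "\<dots> = (a * c - b\<^sup>2) / c" using \<open>c > 0\<close> by (simp add: field_simps power2_eq_square)
    finally show ?thesis using \<open>c > 0\<close> by (simp add: a_def b_def c_def zero_le_divide_iff)
  qed
qed

definition seminorm :: "real^'n \<Rightarrow> real" where
  "seminorm u = sqrt (matrix_form M u u)"

lemma seminorm_nonneg: "0 \<le> seminorm u"
  by (simp add: seminorm_def matrix_form_nonneg)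

lemma seminorm_power2: "(seminorm u)\<^sup>2 = matrix_form M u u"
  by (simp add: seminorm_def matrix_form_nonneg)

lemma abs_matrix_form_le: "\<bar>matrix_form M u v\<bar> \<le> seminorm u * seminorm v"
  using real_sqrt_le_mono[OF matrix_form_Cauchy_Schwarz[of u v]]
  by (simp add: seminorm_def real_sqrt_mult)

lemma seminorm_triangle: "seminorm (u + v) \<le> seminorm u + seminorm v"
proof (rule power2_le_imp_le)
  have "(seminorm (u + v))\<^sup>2 = (seminorm u)\<^sup>2 + 2 * matrix_form M u v + (seminorm v)\<^sup>2"
    using bilinear_matrix_form[of M]
    by (simp add: seminorm_power2 bilinear_ladd bilinear_radd matrix_form_commute[of v u])
  also have "\<dots> \<le> (seminorm u + seminorm v)\<^sup>2"
    using abs_matrix_form_le[of u v] by (simp add: power2_sum)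
  finally show "(seminorm (u + v))\<^sup>2 \<le> (seminorm u + seminorm v)\<^sup>2" .
qed (simp add: seminorm_nonneg add_nonneg_nonneg)

lemma seminorm_scaleR: "seminorm (a *\<^sub>R u) = \<bar>a\<bar> * seminorm u"
  using bilinear_matrix_form[of M]
  by (simp add: seminorm_def bilinear_lmul bilinear_rmul real_sqrt_mult
      flip: mult.assoc power2_eq_square)

lemma seminorm_diff_le: "seminorm (u - v) \<le> seminorm u + seminorm v"
  using seminorm_triangle[of u "- v"] seminorm_scaleR[of "-1" v] by simp

lemma seminorm_sum_le: "seminorm (sum f S) \<le> (\<Sum>i\<in>S. seminorm (f i))"
proof (induction S rule: infinite_finite_induct)
  case (insert x F)
  then show ?case using seminorm_triangle[of "f x" "sum f F"] by simp
qed (simp_all add: seminorm_def matrix_form_def)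

lemma seminorm_diff_triangle: "\<bar>seminorm (u + w) - seminorm (v + w)\<bar> \<le> seminorm (u - v)"
  using seminorm_triangle[of "u - v" "v + w"] seminorm_triangle[of "v - u" "u + w"]
        seminorm_scaleR[of "-1" "u - v"]
  by (simp add: abs_le_iff algebra_simps)

section \<open>Concentration of the seminorm of an i.i.d. sum\<close>

lemma expectation_matrix_form_sum_le:
  fixes Y :: "'a \<Rightarrow> real^'n"
  assumes fin: "finite (set_pmf D)"
    and mean0: "\<And>l. measure_pmf.expectation D (\<lambda>s. Y s $ l) = 0"
    and bd: "\<And>s. s \<in> set_pmf D \<Longrightarrow> matrix_form M (Y s) (Y s) \<le> K"
  shows "measure_pmf.expectation (Pi_pmf {..<n} d (\<lambda>_. D))
           (\<lambda>w. matrix_form M (\<Sum>t<n. Y (w t)) (\<Sum>t<n. Y (w t))) \<le> real n * K"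
proof (induction n)
  case 0
  then show ?case by (simp add: matrix_form_def)
next
  case (Suc n)
  let ?Q = "Pi_pmf {..<n} d (\<lambda>_. D)"
  have finQ: "finite (set_pmf ?Q)" by (intro finite_set_Pi_pmf fin) auto
  define F where "F w = (\<Sum>t<n. Y (w t))" for w
  have sum_update: "(\<Sum>t<Suc n. Y ((w(n := y)) t)) = F w + Y y" for w y
    unfolding F_def by (auto intro: sum.cong)
  have cross: "measure_pmf.expectation D (\<lambda>y. matrix_form M (F w) (Y y)) = 0" for w
  proof -
    have "(\<chi> l. measure_pmf.expectation D (\<lambda>s. Y s $ l)) = 0" by (simp add: mean0 vec_eq_iff)
    then show ?thesis
      by (simp only: expectation_matrix_form_right[OF fin]) (simp add: matrix_form_def)
  qed
  have step: "measure_pmf.expectation D (\<lambda>y. matrix_form M (F w + Y y) (F w + Y y))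
                \<le> matrix_form M (F w) (F w) + K" for w
  proof -
    have "matrix_form M (F w + Y y) (F w + Y y)
          = matrix_form M (F w) (F w) + 2 * matrix_form M (F w) (Y y) + matrix_form M (Y y) (Y y)" for y
      using bilinear_matrix_form[of M]
      by (simp add: bilinear_ladd bilinear_radd matrix_form_commute[of "Y y" "F w"])
    then have "measure_pmf.expectation D (\<lambda>y. matrix_form M (F w + Y y) (F w + Y y))
          = matrix_form M (F w) (F w) + measure_pmf.expectation D (\<lambda>y. matrix_form M (Y y) (Y y))"
      using cross[of w] by (simp add: integrable_measure_pmf_finite[OF fin])
    also have "measure_pmf.expectation D (\<lambda>y. matrix_form M (Y y) (Y y)) \<le> K"
      using bd by (intro measure_pmf.integral_le_const integrable_measure_pmf_finite fin AE_pmfI)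
    finally show ?thesis by simp
  qed
  have "measure_pmf.expectation (Pi_pmf {..<Suc n} d (\<lambda>_. D))
          (\<lambda>w. matrix_form M (\<Sum>t<Suc n. Y (w t)) (\<Sum>t<Suc n. Y (w t)))
      = measure_pmf.expectation ?Q (\<lambda>w. measure_pmf.expectation D
          (\<lambda>y. matrix_form M (F w + Y y) (F w + Y y)))"
    by (simp only: expectation_Pi_pmf_lessThan_Suc[OF fin] sum_update)
  also have "\<dots> \<le> measure_pmf.expectation ?Q (\<lambda>w. matrix_form M (F w) (F w) + K)"
    by (intro integral_mono integrable_measure_pmf_finite finQ step)
  also have "\<dots> = measure_pmf.expectation ?Q (\<lambda>w. matrix_form M (F w) (F w)) + K"
    by (simp add: integrable_measure_pmf_finite finQ)
  also have "\<dots> \<le> real (Suc n) * K"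
    using Suc.IH by (simp add: F_def algebra_simps)
  finally show ?case .
qed

lemma expectation_seminorm_sum_le:
  fixes Y :: "'a \<Rightarrow> real^'n"
  assumes fin: "finite (set_pmf D)"
    and mean0: "\<And>l. measure_pmf.expectation D (\<lambda>s. Y s $ l) = 0"
    and bd: "\<And>s. seminorm (Y s) \<le> C"
  shows "measure_pmf.expectation (Pi_pmf {..<n} d (\<lambda>_. D)) (\<lambda>w. seminorm (\<Sum>t<n. Y (w t)))
         \<le> C * sqrt (real n)"
proof -
  let ?Q = "Pi_pmf {..<n} d (\<lambda>_. D)"
  have finQ: "finite (set_pmf ?Q)" by (intro finite_set_Pi_pmf fin) auto
  have "C \<ge> 0" by (rule order_trans[OF seminorm_nonneg bd])
  have sq: "matrix_form M (Y s) (Y s) \<le> C\<^sup>2" for s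
  proof -
    have "(seminorm (Y s))\<^sup>2 \<le> C\<^sup>2" by (intro power_mono bd seminorm_nonneg)
    then show ?thesis by (simp add: seminorm_power2)
  qed
  have "measure_pmf.expectation ?Q (\<lambda>w. seminorm (\<Sum>t<n. Y (w t)))
        \<le> sqrt (measure_pmf.expectation ?Q (\<lambda>w. matrix_form M (\<Sum>t<n. Y (w t)) (\<Sum>t<n. Y (w t))))"
    using expectation_le_sqrt_second_moment[OF finQ, of "\<lambda>w. seminorm (\<Sum>t<n. Y (w t))"]
    by (simp add: seminorm_power2)
  also have "\<dots> \<le> sqrt (real n * C\<^sup>2)"
    by (intro real_sqrt_le_mono expectation_matrix_form_sum_le fin mean0 sq)
  also have "\<dots> = C * sqrt (real n)"
    using \<open>C \<ge> 0\<close> by (simp add: real_sqrt_mult)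
  finally show ?thesis .
qed

lemma seminorm_sum_update_diff:
  fixes Y :: "'a \<Rightarrow> real^'n" and n :: nat
  assumes "i < n"
  shows "\<bar>seminorm (\<Sum>t<n. Y ((w(i := x)) t)) - seminorm (\<Sum>t<n. Y ((w(i := y)) t))\<bar>
         \<le> seminorm (Y x - Y y)"
proof -
  define rest where "rest = (\<Sum>t\<in>{..<n} - {i}. Y (w t))"
  have "(\<Sum>t<n. Y ((w(i := z)) t)) = Y z + rest" for z
  proof -
    have "(\<Sum>t<n. Y ((w(i := z)) t)) = Y ((w(i := z)) i) + (\<Sum>t\<in>{..<n} - {i}. Y ((w(i := z)) t))"
      using assms by (intro sum.remove) auto
    also have "(\<Sum>t\<in>{..<n} - {i}. Y ((w(i := z)) t)) = rest"
      unfolding rest_def by (intro sum.cong) auto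
    finally show ?thesis by simp
  qed
  then show ?thesis
    using seminorm_diff_triangle by simp
qed

lemma seminorm_sum_tail:
  fixes Y :: "'a \<Rightarrow> real^'n"
  assumes fin: "finite (set_pmf D)"
    and mean0: "\<And>l. measure_pmf.expectation D (\<lambda>s. Y s $ l) = 0"
    and bd: "\<And>s. seminorm (Y s) \<le> C"
    and osc: "\<And>x y. seminorm (Y x - Y y) \<le> c"
    and t: "t > 0" and c: "c > 0" and n: "n > 0"
  shows "measure_pmf.prob (Pi_pmf {..<n} d (\<lambda>_. D))
           {w. seminorm (\<Sum>t<n. Y (w t)) \<ge> C * sqrt (real n) + t}
         \<le> exp (- 2 * t\<^sup>2 / (real n * c\<^sup>2))"
proof -
  let ?Q = "Pi_pmf {..<n} d (\<lambda>_. D)"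
  let ?f = "\<lambda>w. seminorm (\<Sum>t<n. Y (w t))"
  have "{w. ?f w \<ge> C * sqrt (real n) + t} \<subseteq> {w. ?f w - measure_pmf.expectation ?Q ?f \<ge> t}"
    using expectation_seminorm_sum_le[OF fin mean0 bd, of n d] by auto
  then have "measure_pmf.prob ?Q {w. ?f w \<ge> C * sqrt (real n) + t}
             \<le> measure_pmf.prob ?Q {w. ?f w - measure_pmf.expectation ?Q ?f \<ge> t}"
    by (intro measure_pmf.finite_measure_mono) auto
  also have "\<dots> \<le> exp (- 2 * t\<^sup>2 / (real n * c\<^sup>2))"
  proof (rule McDiarmid_inequality_Pi_pmf[OF fin t c n])
    fix w i x y assume "i < n"
    then show "\<bar>?f (w(i := x)) - ?f (w(i := y))\<bar> \<le> c"
      using seminorm_sum_update_diff[of i n Y w x y] osc[of x y] by linarith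
  qed
  finally show ?thesis .
qed

section \<open>Rows of empirical resolvents\<close>

lemma seminorm_row_le_sqrt_diag_norm: "seminorm (A $ k) \<le> sqrt (diag_norm (A ** M ** transpose A))"
  unfolding seminorm_def
  using abs_diag_le_diag_norm[of "A ** M ** transpose A" k]
  by (intro real_sqrt_le_mono) (simp add: diag_matrix_form)

lemma seminorm_row_stochastic_mult_le:
  assumes P: "row_stochastic P" and R: "\<And>k. seminorm (R $ k) \<le> B"
  shows "seminorm ((P ** R) $ j) \<le> B"
proof -
  have "seminorm ((P ** R) $ j) \<le> (\<Sum>k\<in>UNIV. P $ j $ k * seminorm (R $ k))"
    using seminorm_sum_le[of "\<lambda>k. P $ j $ k *\<^sub>R R $ k" UNIV] P
    by (simp add: row_matrix_mult seminorm_scaleR row_stochastic_def)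
  also have "\<dots> \<le> (\<Sum>k\<in>UNIV. P $ j $ k * B)"
    using P R by (intro sum_mono mult_left_mono) (auto simp: row_stochastic_def)
  also have "\<dots> = B"
    using P by (simp add: row_stochastic_def flip: sum_distrib_right)
  finally show ?thesis .
qed

lemma seminorm_resolvent_row_le:
  assumes P: "row_stochastic P" and Q: "row_stochastic Q" and g: "0 \<le> g" "g < 1"
    and RP: "seminorm (resolvent g P $ i) \<le> B"
    and dev: "\<And>j. seminorm (((Q - P) ** resolvent g P) $ j) \<le> e"
  shows "seminorm (resolvent g Q $ i) \<le> B + g / (1 - g) * e"
proof -
  let ?RQ = "resolvent g Q" and ?H = "(Q - P) ** resolvent g P"
  define S where "S = (\<Sum>j\<in>UNIV. ?RQ $ i $ j *\<^sub>R ?H $ j)"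
  have "?RQ $ i = resolvent g P $ i + g *\<^sub>R (?RQ ** ?H) $ i"
    using arg_cong[OF resolvent_perturbation[OF P Q g], of "\<lambda>A. A $ i"]
    by (simp add: matrix_mul_assoc)
  then have "?RQ $ i = resolvent g P $ i + g *\<^sub>R S"
    by (simp only: row_matrix_mult S_def)
  then have "seminorm (?RQ $ i) \<le> seminorm (resolvent g P $ i) + g * seminorm S"
    using seminorm_triangle[of "resolvent g P $ i" "g *\<^sub>R S"] seminorm_scaleR[of g S] g by simp
  also have "\<dots> \<le> B + g * (\<Sum>j\<in>UNIV. ?RQ $ i $ j * seminorm (?H $ j))"
    using seminorm_sum_le[of "\<lambda>j. ?RQ $ i $ j *\<^sub>R ?H $ j" UNIV] resolvent_nonneg[OF Q g] RP g
    by (intro add_mono mult_left_mono) (simp_all add: S_def seminorm_scaleR)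
  also have "\<dots> \<le> B + g * (\<Sum>j\<in>UNIV. ?RQ $ i $ j * e)"
    using resolvent_nonneg[OF Q g] g dev by (intro add_left_mono mult_left_mono sum_mono) auto
  also have "\<dots> = B + g / (1 - g) * e"
    using resolvent_row_sum[OF Q g] by (simp flip: sum_distrib_right)
  finally show ?thesis .
qed

text \<open>The constant 7/10 is chosen so that (1 + 7/10)^2 < 3; the sample-size condition
  makes McDiarmid's exponent at least L once the mean (of order 2 B sqrt n) is subtracted.\<close>
lemma seminorm_mean_deviation_tail:
  fixes \<phi> :: "'a \<Rightarrow> real^'n" and n :: nat
  assumes fin: "finite (set_pmf D)"
    and mean: "\<And>l. measure_pmf.expectation D (\<lambda>s. \<phi> s $ l) = \<mu> $ l"
    and bd: "\<And>s. seminorm (\<phi> s) \<le> B" "seminorm \<mu> \<le> B"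
    and n: "n > 0" and L: "L \<ge> 1" and g: "g < 1" and nL: "32 * L \<le> (1 - g)\<^sup>2 * real n"
  shows "measure_pmf.prob (Pi_pmf {..<n} d (\<lambda>_. D))
           {w. seminorm (\<Sum>t<n. \<phi> (w t) - \<mu>) > 7/10 * (1 - g) * B * real n} \<le> exp (- L)"
proof (cases "B = 0")
  case True
  have "seminorm (\<phi> s - \<mu>) \<le> 0" for s
    using seminorm_diff_le[of "\<phi> s" \<mu>] bd(1)[of s] bd(2) True by linarith
  then have "seminorm (\<Sum>t<n. \<phi> (w t) - \<mu>) \<le> 0" for w
    by (rule order_trans[OF seminorm_sum_le sum_nonpos])
  then have "{w. seminorm (\<Sum>t<n. \<phi> (w t) - \<mu>) > 7/10 * (1 - g) * B * real n} = {}"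
    using True by (simp add: not_less)
  then show ?thesis by simp
next
  case False
  with bd(2) seminorm_nonneg[of \<mu>] have B: "B > 0" by linarith
  define s where "s = (1 - g) * sqrt (real n)"
  have "s \<ge> 0" "s\<^sup>2 = (1 - g)\<^sup>2 * real n"
    using g by (simp_all add: s_def power_mult_distrib)
  with L nL have s: "7/10 * s - 2 > 0" "L \<le> (7/10 * s - 2)\<^sup>2 / 2"
    using tail_exponent_ge by auto
  define t where "t = B * sqrt (real n) * (7/10 * s - 2)"
  have t: "t > 0" using B s n by (simp add: t_def)
  have threshold: "7/10 * (1 - g) * B * real n = 2 * B * sqrt (real n) + t"
  proof -
    have "2 * B * r + B * r * (7/10 * ((1 - g) * r) - 2) = 7/10 * (1 - g) * B * r\<^sup>2" for r :: real
      by (simp add: power2_eq_square algebra_simps)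
    from this[of "sqrt (real n)"] show ?thesis by (simp add: t_def s_def)
  qed
  have mean0: "measure_pmf.expectation D (\<lambda>s. (\<phi> s - \<mu>) $ l) = 0" for l
    using mean by (simp add: integrable_measure_pmf_finite[OF fin])
  have "measure_pmf.prob (Pi_pmf {..<n} d (\<lambda>_. D))
          {w. seminorm (\<Sum>t<n. \<phi> (w t) - \<mu>) > 7/10 * (1 - g) * B * real n}
        \<le> measure_pmf.prob (Pi_pmf {..<n} d (\<lambda>_. D))
          {w. seminorm (\<Sum>t<n. \<phi> (w t) - \<mu>) \<ge> 2 * B * sqrt (real n) + t}"
    unfolding threshold by (intro measure_pmf.finite_measure_mono) auto
  also have "\<dots> \<le> exp (- 2 * t\<^sup>2 / (real n * (2 * B)\<^sup>2))"
  proof (rule seminorm_sum_tail[OF fin mean0 _ _ t _ n])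
    show "seminorm (\<phi> s - \<mu>) \<le> 2 * B" for s
      using seminorm_diff_le[of "\<phi> s" \<mu>] bd(1)[of s] bd(2) by linarith
    show "seminorm ((\<phi> x - \<mu>) - (\<phi> y - \<mu>)) \<le> 2 * B" for x y
      using seminorm_diff_le[of "\<phi> x" "\<phi> y"] bd(1)[of x] bd(1)[of y] by simp
  qed (use B in simp)
  also have "\<dots> = exp (- ((7/10 * s - 2)\<^sup>2 / 2))"
  proof -
    have "t\<^sup>2 = B\<^sup>2 * real n * (7/10 * s - 2)\<^sup>2" by (simp add: t_def power_mult_distrib)
    with B n show ?thesis by (simp add: power_mult_distrib field_simps)
  qed
  also have "\<dots> \<le> exp (- L)" using s by simp
  finally show ?thesis .
qed

lemma prob_empirical_row_deviation:
  assumes P: "row_stochastic P" and R: "\<And>k. seminorm (R $ k) \<le> B"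
    and n: "n > 0" and L: "L \<ge> 1" and g: "g < 1" and nL: "32 * L \<le> (1 - g)\<^sup>2 * real n"
  shows "measure_pmf.prob (samples_pmf P n)
           {w. seminorm (((empirical n w - P) ** R) $ j) > 7/10 * (1 - g) * B} \<le> exp (- L)"
proof -
  have finite_sample: "finite (set_pmf (sample_pmf P))" by simp
  have deviation: "((empirical n w - P) ** R) $ j = (1 / real n) *\<^sub>R (\<Sum>t<n. R $ (w t j) - (P ** R) $ j)" for w
    using n by (simp add: matrix_diff_rdistrib row_empirical_mult sum_subtractf scaleR_diff_right
                          sum_constant_scaleR del: sum_constant)
  have "{w. seminorm (((empirical n w - P) ** R) $ j) > 7/10 * (1 - g) * B}
      = {w. seminorm (\<Sum>t<n. R $ (w t j) - (P ** R) $ j) > 7/10 * (1 - g) * B * real n}"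
    using n by (auto simp: deviation seminorm_scaleR field_simps)
  also have "measure_pmf.prob (samples_pmf P n) \<dots> \<le> exp (- L)"
    unfolding samples_pmf_def
    by (intro seminorm_mean_deviation_tail[OF finite_sample _ _ _ n L g nL]
              expectation_sample_row P R seminorm_row_stochastic_mult_le)
  finally show ?thesis .
qed

lemma prob_empirical_deviation:
  fixes P :: "real^'m::finite^'m"
  assumes "row_stochastic P" "\<And>k. seminorm (R $ k) \<le> B"
    and "n > 0" "L \<ge> 1" "g < 1" "32 * L \<le> (1 - g)\<^sup>2 * real n"
  shows "measure_pmf.prob (samples_pmf P n)
           {w. \<exists>j. seminorm (((empirical n w - P) ** R) $ j) > 7/10 * (1 - g) * B}
         \<le> real CARD('m) * exp (- L)"
proof -
  have "measure_pmf.prob (samples_pmf P n)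
          (\<Union>j. {w. seminorm (((empirical n w - P) ** R) $ j) > 7/10 * (1 - g) * B})
        \<le> (\<Sum>j\<in>UNIV. measure_pmf.prob (samples_pmf P n)
             {w. seminorm (((empirical n w - P) ** R) $ j) > 7/10 * (1 - g) * B})"
    by (rule measure_pmf.finite_measure_subadditive_finite) auto
  also have "\<dots> \<le> (\<Sum>j\<in>(UNIV :: 'm set). exp (- L))"
    by (rule sum_mono) (rule prob_empirical_row_deviation[OF assms])
  finally show ?thesis by (simp add: Collect_ex_eq)
qed

lemma diag_norm_empirical_resolvents_le:
  fixes P :: "real^'n^'n" and g :: real
  defines "\<sigma> \<equiv> diag_norm (resolvent g P ** M ** transpose (resolvent g P))"
  assumes P: "row_stochastic P" and g: "0 \<le> g" "g < 1" and n: "n > 0"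
    and good: "\<And>w j. w \<in> {w1, w2} \<Longrightarrow>
        seminorm (((empirical n w - P) ** resolvent g P) $ j) \<le> 7/10 * (1 - g) * sqrt \<sigma>"
  shows "diag_norm (resolvent g (empirical n w1) ** M ** transpose (resolvent g (empirical n w2)))
         \<le> 3 * \<sigma>"
proof (rule diag_norm_leI)
  fix i
  have "\<sigma> \<ge> 0"
    using abs_diag_le_diag_norm[of "resolvent g P ** M ** transpose (resolvent g P)" i]
    unfolding \<sigma>_def by linarith
  have row: "seminorm (resolvent g (empirical n w) $ i) \<le> 17/10 * sqrt \<sigma>" if "w \<in> {w1, w2}" for w
  proof -
    have "seminorm (resolvent g (empirical n w) $ i)
          \<le> sqrt \<sigma> + g / (1 - g) * (7/10 * (1 - g) * sqrt \<sigma>)"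
      using P row_stochastic_empirical[OF n] g good[OF that]
      by (intro seminorm_resolvent_row_le) (auto simp: \<sigma>_def seminorm_row_le_sqrt_diag_norm)
    also have "\<dots> = (1 + 7/10 * g) * sqrt \<sigma>"
      using g by (simp add: field_simps)
    also have "\<dots> \<le> 17/10 * sqrt \<sigma>"
      using g \<open>\<sigma> \<ge> 0\<close> by (intro mult_right_mono) auto
    finally show ?thesis .
  qed
  have "\<bar>(resolvent g (empirical n w1) ** M ** transpose (resolvent g (empirical n w2))) $ i $ i\<bar>
        \<le> seminorm (resolvent g (empirical n w1) $ i) * seminorm (resolvent g (empirical n w2) $ i)"
    by (simp add: diag_matrix_form abs_matrix_form_le)
  also have "\<dots> \<le> (17/10 * sqrt \<sigma>) * (17/10 * sqrt \<sigma>)"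
    using row seminorm_nonneg \<open>\<sigma> \<ge> 0\<close> by (intro mult_mono) auto
  also have "\<dots> \<le> 3 * \<sigma>"
    using \<open>\<sigma> \<ge> 0\<close> by simp
  finally show "\<bar>(resolvent g (empirical n w1) ** M ** transpose (resolvent g (empirical n w2))) $ i $ i\<bar>
                \<le> 3 * \<sigma>" .
qed

end

theorem lemma1:
  fixes P M :: "real^'x::finite^'x" and \<gamma> \<delta> :: real and nh :: nat
  assumes "row_stochastic P"
    and "0 < \<gamma>" "\<gamma> < 1"
    and "0 < \<delta>" "\<delta> < 1"
    and "real nh \<ge> 32 * ln (4 * real (CARD('x))^2 / \<delta>) / (1 - \<gamma>)^2"
    and "psd M"
  shows "measure_pmf.prob (pair_pmf (samples_pmf P nh) (samples_pmf P nh))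
     {(\<omega>1, \<omega>2).
        diag_norm (matrix_inv (mat 1 - \<gamma> *\<^sub>R empirical nh \<omega>1) ** M **
                   transpose (matrix_inv (mat 1 - \<gamma> *\<^sub>R empirical nh \<omega>2)))
        \<le> 3 * diag_norm (matrix_inv (mat 1 - \<gamma> *\<^sub>R P) ** M **
                   transpose (matrix_inv (mat 1 - \<gamma> *\<^sub>R P)))}
     \<ge> 1 - \<delta>"
proof -
  interpret psd_matrix M by unfold_locales fact
  let ?pair = "pair_pmf (samples_pmf P nh) (samples_pmf P nh)"
  define L where "L = ln (4 * real (CARD('x))^2 / \<delta>)"
  have L: "L \<ge> 1" "32 * L \<le> (1 - \<gamma>)\<^sup>2 * real nh" "nh > 0" "real CARD('x) * exp (- L) \<le> \<delta> / 4"
    using sample_size_consequences[of "real CARD('x)" \<delta> \<gamma> nh] assms(3-6) by (simp_all add: L_def)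
  define R where "R = resolvent \<gamma> P"
  define \<sigma> where "\<sigma> = diag_norm (R ** M ** transpose R)"
  define Good where "Good = {w. \<forall>j. seminorm (((empirical nh w - P) ** R) $ j) \<le> 7/10 * (1 - \<gamma>) * sqrt \<sigma>}"
  have bad: "measure_pmf.prob (samples_pmf P nh) (- Good) \<le> \<delta> / 4"
    using prob_empirical_deviation[OF assms(1) seminorm_row_le_sqrt_diag_norm[of R] L(3,1) assms(3) L(2)] L(4)
    by (simp add: Good_def \<sigma>_def not_le Compl_eq)
  have "1 - \<delta> \<le> measure_pmf.prob ?pair (Good \<times> Good)"
    using prob_pair_pmf_Times_ge[OF bad bad] assms(4) by linarith
  also have "\<dots> \<le> measure_pmf.prob ?pair {(\<omega>1, \<omega>2).
      diag_norm (resolvent \<gamma> (empirical nh \<omega>1) ** M ** transpose (resolvent \<gamma> (empirical nh \<omega>2)))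
      \<le> 3 * diag_norm (resolvent \<gamma> P ** M ** transpose (resolvent \<gamma> P))}"
    using diag_norm_empirical_resolvents_le[OF assms(1) _ assms(3) L(3)] assms(2)
    by (intro measure_pmf.finite_measure_mono) (auto simp: Good_def \<sigma>_def R_def)
  finally show ?thesis unfolding resolvent_def .
qed

end
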